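(* Let $F(x,y)=ax^4+bx^3y+cx^2y^2+dxy^3+ey^4$ be an integral binary quartic form with $a\neq0$ and $b\neq 0$. Let $p>3$ be a prime with $\nu_p(b)>0$. Then $R(F)$ is dense in $\mathbb{Q}_p$ if one of the following holds: (1) $p\equiv 1\pmod 3$, $a^2c^2+12a^3e\equiv 0\pmod p$, and $8a^3c^3+27a^4d^2$ is a cubic non-residue modulo $p$; (2) $a^2c^2+12a^3e\not\equiv 0\pmod p$ and $s_{p+1}\equiv a^2c^2-4a^3e\pmod p$, where the sequence $(s_n)$ is defined by $s_0=3$, $s_1=-2ac$, $s_2=2a^2c^2+8a^3e$, and $s_{n+3}=-2acs_{n+2}+(4a^3e-a^2c^2)s_{n+1}+a^4d^2s_n$ for $n\geq 0$.
   Context: $\nu_p$ is the $p$-adic valuation. $R(F)=\{F(x_1,y_1)/F(x_2,y_2) : x_i,y_i\in\mathbb{Z},\ F(x_2,y_2)\neq 0\}$, and density is in the $p$-adic topology. *)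

theory Defs
  imports "HOL-Number_Theory.Number_Theory"
begin

definition quartic_form :: "int \<Rightarrow> int \<Rightarrow> int \<Rightarrow> int \<Rightarrow> int \<Rightarrow> int \<Rightarrow> int \<Rightarrow> int" where
  "quartic_form a b c d e x y = a*x^4 + b*x^3*y + c*x^2*y^2 + d*x*y^3 + e*y^4"

definition ratio_set :: "(int \<Rightarrow> int \<Rightarrow> int) \<Rightarrow> rat set" where
  "ratio_set F = {of_int (F x1 y1) / of_int (F x2 y2) | x1 y1 x2 y2. F x2 y2 \<noteq> 0}"

definition padic_val_rat :: "nat \<Rightarrow> rat \<Rightarrow> int" where
  "padic_val_rat p q = (case quotient_of q of (n, m) \<Rightarrow>
      int (multiplicity (int p) n) - int (multiplicity (int p) m))"

text \<open>A set of rationals is dense in Q_p. Since Q is dense in Q_p, this means: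
  every p-adic ball around a rational point, of radius p^(-k), meets S.\<close>
definition padic_dense :: "nat \<Rightarrow> rat set \<Rightarrow> bool" where
  "padic_dense p S \<longleftrightarrow>
     (\<forall>x::rat. \<forall>k::int. \<exists>r\<in>S. r = x \<or> padic_val_rat p (r - x) \<ge> k)"

definition cubic_residue :: "nat \<Rightarrow> int \<Rightarrow> bool" where
  "cubic_residue p n \<longleftrightarrow> (\<exists>x::int. [x^3 = n] (mod int p))"

definition cubic_nonresidue :: "nat \<Rightarrow> int \<Rightarrow> bool" where
  "cubic_nonresidue p n \<longleftrightarrow> \<not> (int p dvd n) \<and> \<not> cubic_residue p n"

fun s_seq :: "int \<Rightarrow> int \<Rightarrow> int \<Rightarrow> int \<Rightarrow> nat \<Rightarrow> int" where
  "s_seq a c d e 0 = 3"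
| "s_seq a c d e (Suc 0) = -2*a*c"
| "s_seq a c d e (Suc (Suc 0)) = 2*a^2*c^2 + 8*a^3*e"
| "s_seq a c d e (Suc (Suc (Suc n))) =
     -2*a*c * s_seq a c d e (Suc (Suc n)) + (4*a^3*e - a^2*c^2) * s_seq a c d e (Suc n)
     + a^4*d^2 * s_seq a c d e n"

end

theory Submission
  imports Defs "HOL-Computational_Algebra.Polynomial" "HOL-Algebra.Algebraic_Closure"
begin

(* Since p divides b, the quartic F(t, 1) reduces modulo p to a depressed quartic
   a t^4 + c t^2 + d t + e, with roots x, y, z, w (summing to zero) in an algebraic closure of F_p.
   Its resolvent cubic has the roots theta_i = a^2 (x + y)^2, a^2 (x + z)^2, a^2 (x + w)^2, one for
   each splitting of the roots into two pairs; their elementary symmetric functions are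
   -2ac, a^2c^2 - 4a^3e, a^4d^2 and their power sums are the s_n.  Each of the two hypotheses
   prevents the Frobenius from fixing a theta_i: under (1) a fixed theta_i would give a cube root
   of 8a^3c^3 + 27a^4d^2 mod p, under (2) the congruence for s_(p+1) would force
   a^2c^2 + 12a^3e = 0 mod p.  Hence the theta_i are distinct, so are the roots, and since the
   Frobenius fixes none of the three pairings it must fix a root: the reduced quartic has a
   simple root in F_p.  Hensel lifting then produces values F(x, 1) congruent to p U and to p W
   modulo any power of p, and their quotients approximate U / W p-adically. *)

hide_const (open) Divisibility.prime

lemma poly_add_taylor_dvd:
  fixes f :: "'a::idom poly"
  shows "t\<^sup>2 dvd poly f (x + t) - poly f x - t * poly (pderiv f) x"
proof (induction f)
  case 0
  show ?case by simp
next
  case (pCons c g)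
  then obtain k where k: "poly g (x + t) - poly g x - t * poly (pderiv g) x = t\<^sup>2 * k"
    by (auto elim: dvdE)
  have "poly (pCons c g) (x + t) - poly (pCons c g) x - t * poly (pderiv (pCons c g)) x
      = x * (poly g (x + t) - poly g x - t * poly (pderiv g) x) + t * (poly g (x + t) - poly g x)"
    by (simp add: pderiv_pCons algebra_simps)
  also have "\<dots> = t\<^sup>2 * (x * k + poly (pderiv g) x + t * k)"
    using k by (simp add: algebra_simps power2_eq_square eq_diff_eq)
  finally show ?case by simp
qed

lemma cong_poly:
  fixes f :: "int poly"
  assumes "[x = y] (mod m)"
  shows "[poly f x = poly f y] (mod m)"
proof -
  obtain k where "poly f x - poly f y - (x - y) * poly (pderiv f) y = (x - y)\<^sup>2 * k"
    using poly_add_taylor_dvd[of "x - y" f y] by (auto elim: dvdE)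
  then have "poly f x - poly f y = (x - y) * ((x - y) * k + poly (pderiv f) y)"
    by (simp add: algebra_simps power2_eq_square)
  then have "x - y dvd poly f x - poly f y"
    by simp
  moreover have "m dvd x - y"
    using assms by (simp add: cong_iff_dvd_diff)
  ultimately show ?thesis
    by (simp add: cong_iff_dvd_diff cong_sym_eq dvd_trans)
qed

lemma hensel_lifting:
  fixes f :: "int poly" and p :: nat
  assumes p: "prime p" and root: "[poly f r = T] (mod int p)"
    and simple: "\<not> int p dvd poly (pderiv f) r" and N: "N \<ge> 1"
  shows "\<exists>x. [x = r] (mod int p) \<and> [poly f x = T] (mod int p ^ N)"
  using N
proof (induction N rule: dec_induct)
  case base
  show ?case using root by (intro exI[of _ r]) simp
next
  case (step N)
  then obtain x where xr: "[x = r] (mod int p)" and "[poly f x = T] (mod int p ^ N)"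
    by blast
  then obtain m where m: "poly f x - T = int p ^ N * m"
    by (auto simp: cong_iff_dvd_diff cong_sym_eq elim: dvdE)
  let ?D = "poly (pderiv f) x"
  have "[?D = poly (pderiv f) r] (mod int p)"
    using cong_poly[OF xr] .
  then have "coprime ?D (int p)"
    using simple p by (metis cong_dvd_iff coprime_commute prime_imp_coprime prime_nat_int_transfer)
  then obtain u where u: "[?D * u = 1] (mod int p)"
    by (metis cong_solve_coprime_int)
  define t where "t = - m * u"
  have "m + t * ?D = m - m * (?D * u)"
    by (simp add: t_def algebra_simps)
  also have "[\<dots> = m - m * 1] (mod int p)"
    by (intro cong_diff cong_mult cong_refl u)
  finally have "int p dvd m + t * ?D"
    by (simp add: cong_0_iff)
  then have first_order: "int p ^ Suc N dvd int p ^ N * (m + t * ?D)"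
    by simp
  obtain q where q: "poly f (x + int p ^ N * t) - poly f x - int p ^ N * t * ?D = (int p ^ N * t)\<^sup>2 * q"
    using poly_add_taylor_dvd[of "int p ^ N * t" f x] by (auto elim: dvdE)
  have "int p ^ Suc N dvd int p ^ (N + N)"
    using step.hyps by (intro le_imp_power_dvd) simp
  moreover have "(int p ^ N * t)\<^sup>2 * q = int p ^ (N + N) * (t\<^sup>2 * q)"
    by (simp add: power_mult_distrib power_add power2_eq_square)
  ultimately have second_order: "int p ^ Suc N dvd (int p ^ N * t)\<^sup>2 * q"
    by (metis dvd_mult2)
  have "poly f (x + int p ^ N * t) - T = int p ^ N * (m + t * ?D) + (int p ^ N * t)\<^sup>2 * q"
    using q m by (simp add: algebra_simps)
  then have "[poly f (x + int p ^ N * t) = T] (mod int p ^ Suc N)"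
    using first_order second_order by (simp add: cong_iff_dvd_diff)
  moreover have "[x + int p ^ N * t = r + 0] (mod int p)"
    using xr step.hyps by (intro cong_add) (auto simp: cong_0_iff)
  ultimately show ?case by auto
qed

lemma padic_val_rat_of_int_div:
  fixes n m :: int
  assumes p: "prime p" and n: "n \<noteq> 0" and m: "m \<noteq> 0"
  shows "padic_val_rat p (of_int n / of_int m) = int (multiplicity (int p) n) - int (multiplicity (int p) m)"
proof -
  obtain n' m' where q: "quotient_of (of_int n / of_int m) = (n', m')"
    by (cases "quotient_of (of_int n / of_int m :: rat)") auto
  have m'_pos: "m' > 0"
    using q quotient_of_denom_pos by blast
  have "(of_int n / of_int m :: rat) = of_int n' / of_int m'"
    using q quotient_of_div by blast
  then have "of_int (n * m') = (of_int (n' * m) :: rat)"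
    using m m'_pos by (simp add: field_simps)
  then have cross: "n * m' = n' * m"
    by (simp only: of_int_eq_iff)
  then have "n' \<noteq> 0"
    using n m'_pos by auto
  then have "multiplicity (int p) n + multiplicity (int p) m' = multiplicity (int p) n' + multiplicity (int p) m"
    using cross n m m'_pos p
    by (metis prime_elem_multiplicity_mult_distrib prime_nat_iff_prime less_irrefl prime_imp_prime_elem prime_nat_int_transfer)
  then show ?thesis
    unfolding padic_val_rat_def q by simp
qed

lemma multiplicity_eq_if_cong:
  fixes p :: nat and w y :: int
  assumes p: "prime p" and w: "w \<noteq> 0" and cong: "[y = w] (mod int p ^ N)"
    and small: "multiplicity (int p) w < N"
  shows "y \<noteq> 0" and "multiplicity (int p) y = multiplicity (int p) w"
proof -
  have not_unit: "\<not> is_unit (int p)"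
    using prime_gt_1_nat[OF p] by simp
  have "int p ^ N dvd y - w"
    using cong by (simp add: cong_iff_dvd_diff)
  then obtain \<beta> where "y - w = int p ^ N * \<beta>"
    by (elim dvdE)
  then have y: "y = w + int p ^ N * \<beta>"
    by simp
  show "y \<noteq> 0"
  proof
    assume "y = 0"
    then have "w = int p ^ N * (- \<beta>)"
      using y by simp
    then have "int p ^ N dvd w"
      by (rule dvdI)
    then have "N \<le> multiplicity (int p) w"
      by (rule multiplicity_geI[OF w not_unit])
    then show False
      using small by simp
  qed
  show "multiplicity (int p) y = multiplicity (int p) w"
  proof (cases "\<beta> = 0")
    case False
    then have "N \<le> multiplicity (int p) (int p ^ N * \<beta>)"
      using not_unit p by (intro multiplicity_geI) (auto simp: prime_gt_0_nat)
    then show ?thesis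
      using small w False p y by (subst y, intro multiplicity_sum_lt) (auto simp: prime_gt_0_nat)
  qed (simp add: y)
qed

lemma padic_val_quotient_approx:
  fixes p :: nat and F1 F2 U W :: int
  assumes p: "prime p" and W: "W > 0"
    and F1: "[F1 = int p * U] (mod int p ^ N)" and F2: "[F2 = int p * W] (mod int p ^ N)"
    and N: "Suc (multiplicity (int p) W) < N"
  shows "F2 \<noteq> 0"
    and "of_int F1 / of_int F2 \<noteq> (of_int U / of_int W :: rat) \<Longrightarrow>
      int N - 1 - 2 * int (multiplicity (int p) W) \<le> padic_val_rat p (of_int F1 / of_int F2 - of_int U / of_int W)"
proof -
  define v where "v = multiplicity (int p)"
  have pW: "int p * W \<noteq> 0" "v (int p * W) = Suc (v W)"
    using p W by (simp_all add: v_def prime_elem_multiplicity_mult_distrib multiplicity_prime prime_gt_0_nat)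
  then have F2_nonzero: "F2 \<noteq> 0" and v_F2: "v F2 = Suc (v W)"
    using multiplicity_eq_if_cong[OF p pW(1) F2] N by (simp_all add: v_def)
  then show "F2 \<noteq> 0"
    by simp
  assume ne: "of_int F1 / of_int F2 \<noteq> (of_int U / of_int W :: rat)"
  define num where "num = W * (F1 - int p * U) - U * (F2 - int p * W)"
  have diff: "of_int F1 / of_int F2 - of_int U / of_int W = (of_int num / of_int (F2 * W) :: rat)"
    unfolding num_def using F2_nonzero W by (simp add: field_simps)
  then have num: "num \<noteq> 0"
    using ne by auto
  have "int p ^ N dvd F1 - int p * U" "int p ^ N dvd F2 - int p * W"
    using F1 F2 by (simp_all add: cong_iff_dvd_diff)
  then have "int p ^ N dvd num"
    unfolding num_def by (blast intro: dvd_diff dvd_mult)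
  then have "N \<le> v num"
    using num p unfolding v_def by (intro multiplicity_geI) (auto simp: prime_gt_1_nat)
  moreover have "v (F2 * W) = Suc (v W) + v W"
    using p F2_nonzero v_F2 W by (simp add: v_def prime_elem_multiplicity_mult_distrib)
  moreover have "padic_val_rat p (of_int num / of_int (F2 * W)) = int (v num) - int (v (F2 * W))"
    using padic_val_rat_of_int_div[OF p num, of "F2 * W"] F2_nonzero W by (simp add: v_def)
  ultimately show "int N - 1 - 2 * int (v W) \<le> padic_val_rat p (of_int F1 / of_int F2 - of_int U / of_int W)"
    unfolding diff by linarith
qed

text \<open>A rational \<open>U / W\<close> is approximated by quotients of values of \<open>f\<close> congruent to \<open>p U\<close> and
  \<open>p W\<close>: lifting a root of \<open>f\<close> mod \<open>p\<close> only reaches values divisible by \<open>p\<close>.\<close>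
lemma padic_dense_ratio_set_if_simple_root:
  fixes F :: "int \<Rightarrow> int \<Rightarrow> int" and f :: "int poly" and p :: nat
  assumes p: "prime p" and F: "\<And>x. F x 1 = poly f x"
    and root: "int p dvd poly f r" and simple: "\<not> int p dvd poly (pderiv f) r"
  shows "padic_dense p (ratio_set F)"
  unfolding padic_dense_def
proof (intro allI)
  fix q :: rat and k :: int
  obtain U W where UW: "quotient_of q = (U, W)"
    by (cases "quotient_of q") auto
  have W: "W > 0" and q: "q = of_int U / of_int W"
    using UW quotient_of_denom_pos quotient_of_div by blast+
  define N where "N = nat k + 2 + 2 * multiplicity (int p) W"
  have "\<exists>x. [poly f x = int p * T] (mod int p ^ N)" for T
    using hensel_lifting[OF p _ simple, of "int p * T" N] root
    by (auto simp: N_def cong_0_iff cong_iff_dvd_diff)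
  then obtain x1 x2 where x1: "[poly f x1 = int p * U] (mod int p ^ N)"
    and x2: "[poly f x2 = int p * W] (mod int p ^ N)"
    by meson
  have N_large: "Suc (multiplicity (int p) W) < N"
    by (simp add: N_def)
  note approx = padic_val_quotient_approx[OF p W x1 x2 N_large]
  let ?r = "of_int (F x1 1) / of_int (F x2 1) :: rat"
  have "?r = of_int (F x1 1) / of_int (F x2 1) \<and> F x2 1 \<noteq> 0"
    using approx(1) by (simp add: F)
  then have "?r \<in> ratio_set F"
    unfolding ratio_set_def by blast
  moreover have "k \<le> padic_val_rat p (?r - q)" if "?r \<noteq> q"
  proof -
    have "int N - 1 - 2 * int (multiplicity (int p) W) \<le> padic_val_rat p (?r - q)"
      using approx(2) that unfolding F q by blast
    moreover have "k \<le> int (nat k)"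
      by simp
    ultimately show ?thesis
      unfolding N_def by linarith
  qed
  ultimately show "\<exists>r\<in>ratio_set F. r = q \<or> k \<le> padic_val_rat p (r - q)"
    by blast

qed

lemma padic_dense_quartic_if_simple_root:
  fixes a b c d e :: int and p :: nat
  assumes p: "prime p" and b: "int p dvd b"
    and root: "int p dvd a*r^4 + c*r^2 + d*r + e" and simple: "\<not> int p dvd 4*a*r^3 + 2*c*r + d"
  shows "padic_dense p (ratio_set (quartic_form a b c d e))"
proof (rule padic_dense_ratio_set_if_simple_root[OF p])
  let ?f = "[:e, d, c, b, a:]"
  show "quartic_form a b c d e x 1 = poly ?f x" for x
    by (simp add: quartic_form_def algebra_simps power2_eq_square power3_eq_cube power4_eq_xxxx)
  have "poly ?f r = (a*r^4 + c*r^2 + d*r + e) + b * r^3"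
    by (simp add: algebra_simps power2_eq_square power3_eq_cube power4_eq_xxxx)
  then show "int p dvd poly ?f r"
    using root b by (metis dvd_add dvd_mult2)
  have "poly (pderiv ?f) r = (4*a*r^3 + 2*c*r + d) + b * (3 * r^2)"
    by (simp add: pderiv_pCons algebra_simps power2_eq_square power3_eq_cube)
  then show "\<not> int p dvd poly (pderiv ?f) r"
    using simple dvd_add_left_iff[OF dvd_mult2[OF b]] by simp
qed

lemma binomial_prime_power:
  fixes u v :: "'c::comm_ring_1"
  assumes p: "prime p"
  shows "\<exists>g. (u + v) ^ p = u ^ p + v ^ p + of_nat p * g"
proof -
  define c where "c k = (if 0 < k \<and> k < p then (p choose k) div p else 0)" for k
  have binomial_term: "of_nat (p choose k) * u ^ k * v ^ (p - k)
      = (if k = p then u ^ p else 0) + (if k = 0 then v ^ p else 0)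
        + of_nat p * (of_nat (c k) * u ^ k * v ^ (p - k))" if "k \<le> p" for k
  proof -
    have "p \<noteq> 0"
      using p by auto
    consider "k = 0" | "k = p" | "0 < k" "k < p"
      using \<open>k \<le> p\<close> by linarith
    then show ?thesis
    proof cases
      case 3
      then have "p choose k = p * c k"
        using dvd_choose_prime[of k p] p by (simp add: c_def)
      then show ?thesis
        using 3 by (simp add: mult.assoc)
    qed (use \<open>p \<noteq> 0\<close> in \<open>simp_all add: c_def\<close>)
  qed
  have "(u + v) ^ p = (\<Sum>k\<le>p. of_nat (p choose k) * u ^ k * v ^ (p - k))"
    by (simp add: binomial_ring)
  also have "\<dots> = (\<Sum>k\<le>p. (if k = p then u ^ p else 0) + (if k = 0 then v ^ p else 0)
        + of_nat p * (of_nat (c k) * u ^ k * v ^ (p - k)))"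
    using binomial_term by (intro sum.cong) simp_all
  also have "\<dots> = u ^ p + v ^ p + of_nat p * (\<Sum>k\<le>p. of_nat (c k) * u ^ k * v ^ (p - k))"
    by (simp add: sum.distrib sum_distrib_left)
  finally show ?thesis by blast
qed

context cring
begin

definition type_ring_hom :: "('c::comm_ring_1 \<Rightarrow> 'a) \<Rightarrow> bool" where
  "type_ring_hom f \<longleftrightarrow> (\<forall>u. f u \<in> carrier R) \<and> (\<forall>u v. f (u + v) = f u \<oplus> f v) \<and>
     (\<forall>u v. f (u * v) = f u \<otimes> f v) \<and> f 1 = \<one>"

lemma type_ring_homD:
  assumes "type_ring_hom f"
  shows "f u \<in> carrier R" "f (u + v) = f u \<oplus> f v" "f (u * v) = f u \<otimes> f v" "f 1 = \<one>"
  using assms unfolding type_ring_hom_def by auto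

context
  fixes f :: "'c::comm_ring_1 \<Rightarrow> 'a"
  assumes f: "type_ring_hom f"
begin

lemma type_ring_hom_zero: "f 0 = \<zero>"
proof -
  have "f 0 = f 0 \<oplus> f 0"
    using type_ring_homD(2)[OF f, of 0 0] by simp
  then show ?thesis
    using type_ring_homD(1)[OF f] by simp
qed

lemma type_ring_hom_uminus: "f (- u) = \<ominus> f u"
proof -
  have "f (- u) \<oplus> f u = \<zero>"
    using type_ring_homD(2)[OF f, of "- u" u] type_ring_hom_zero by simp
  then show ?thesis
    using type_ring_homD(1)[OF f] by (intro minus_equality[symmetric]) auto
qed

lemma type_ring_hom_diff: "f (u - v) = f u \<ominus> f v"
  using type_ring_homD(2)[OF f, of u "- v"] type_ring_hom_uminus[of v] by (simp add: a_minus_def)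

lemma type_ring_hom_power: "f (u ^ n) = f u [^] n"
  by (induction n) (simp_all add: type_ring_homD[OF f] m_comm[of "f u"])

lemma type_ring_hom_numeral:
  "f (numeral Num.One) = \<one>"
  "f (numeral (Num.Bit0 k)) = f (numeral k) \<oplus> f (numeral k)"
  "f (numeral (Num.Bit1 k)) = f (numeral k) \<oplus> f (numeral k) \<oplus> \<one>"
  by (simp_all only: numeral_One numeral_Bit0 numeral_Bit1 type_ring_homD(2,4)[OF f])

lemmas type_ring_hom_simps = type_ring_homD[OF f] type_ring_hom_zero type_ring_hom_uminus
  type_ring_hom_diff type_ring_hom_power type_ring_hom_numeral

end

text \<open>Nested, \<open>hom_eval\<close> evaluates multivariate polynomials in \<open>R\<close>. This transports polynomial
  identities proved by \<open>Groebner_Basis.algebra\<close> into \<open>R\<close>, where HOL-Algebra's \<open>algebra\<close> method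
  cannot cope with their degree.\<close>
definition hom_eval :: "('c::comm_ring_1 \<Rightarrow> 'a) \<Rightarrow> 'a \<Rightarrow> 'c poly \<Rightarrow> 'a" where
  "hom_eval f x P = foldr (\<lambda>u acc. f u \<oplus> x \<otimes> acc) (coeffs P) \<zero>"

lemma hom_eval_0 [simp]: "hom_eval f x 0 = \<zero>"
  unfolding hom_eval_def by simp

context
  fixes f :: "'c::comm_ring_1 \<Rightarrow> 'a" and x :: 'a
  assumes f: "type_ring_hom f" and x: "x \<in> carrier R"
begin

lemma hom_eval_pCons: "hom_eval f x (pCons u P) = f u \<oplus> x \<otimes> hom_eval f x P"
proof (cases "P = 0 \<and> u = 0")
  case True
  then show ?thesis
    using type_ring_hom_zero[OF f] x by (simp add: hom_eval_def)
qed (auto simp: hom_eval_def cCons_def)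

lemma hom_eval_closed: "hom_eval f x P \<in> carrier R"
  by (induction P) (simp_all add: hom_eval_pCons x type_ring_homD(1)[OF f])

lemma hom_eval_add: "hom_eval f x (P + Q) = hom_eval f x P \<oplus> hom_eval f x Q"
proof (induction P arbitrary: Q)
  case 0
  then show ?case using hom_eval_closed by simp
next
  case (pCons u P)
  show ?case
  proof (cases Q)
    case (pCons v Q')
    have "hom_eval f x (pCons u P + Q) = f (u + v) \<oplus> x \<otimes> hom_eval f x (P + Q')"
      using pCons by (simp add: hom_eval_pCons)
    also have "\<dots> = (f u \<oplus> x \<otimes> hom_eval f x P) \<oplus> (f v \<oplus> x \<otimes> hom_eval f x Q')"
      using pCons.IH type_ring_homD[OF f] x hom_eval_closed by (simp add: r_distr a_ac)
    finally show ?thesis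
      using pCons by (simp add: hom_eval_pCons)
  qed
qed

lemma hom_eval_smult: "hom_eval f x (smult u Q) = f u \<otimes> hom_eval f x Q"
proof (induction Q)
  case 0
  then show ?case using type_ring_homD(1)[OF f] by simp
next
  case (pCons v Q)
  have "hom_eval f x (smult u (pCons v Q)) = f (u * v) \<oplus> x \<otimes> (f u \<otimes> hom_eval f x Q)"
    using pCons by (simp add: hom_eval_pCons)
  also have "\<dots> = f u \<otimes> (f v \<oplus> x \<otimes> hom_eval f x Q)"
    using type_ring_homD[OF f] x hom_eval_closed by (simp add: r_distr m_lcomm)
  finally show ?case
    by (simp add: hom_eval_pCons)
qed

lemma hom_eval_mult: "hom_eval f x (P * Q) = hom_eval f x P \<otimes> hom_eval f x Q"
proof (induction P)
  case 0
  then show ?case using hom_eval_closed by simp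
next
  case (pCons u P)
  have "hom_eval f x (pCons u P * Q) = f u \<otimes> hom_eval f x Q \<oplus> x \<otimes> (hom_eval f x P \<otimes> hom_eval f x Q)"
    using pCons x by (simp add: hom_eval_pCons hom_eval_add hom_eval_smult hom_eval_closed
        type_ring_homD(1)[OF f] type_ring_hom_zero[OF f])
  also have "\<dots> = (f u \<oplus> x \<otimes> hom_eval f x P) \<otimes> hom_eval f x Q"
    using type_ring_homD[OF f] x hom_eval_closed by (simp add: l_distr m_assoc)
  finally show ?case
    using x by (simp add: hom_eval_pCons)
qed

lemma hom_eval_const: "hom_eval f x [:u:] = f u"
  using type_ring_homD(1)[OF f] x by (simp add: hom_eval_pCons)

lemma hom_eval_X: "hom_eval f x [:0, 1:] = x"
  using type_ring_homD[OF f] x by (simp add: hom_eval_pCons type_ring_hom_zero[OF f])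

lemma hom_eval_of_nat: "hom_eval f x (of_nat n) = f (of_nat n)"
  by (simp add: of_nat_poly hom_eval_const)

lemma type_ring_hom_hom_eval: "type_ring_hom (hom_eval f x)"
proof -
  have "hom_eval f x 1 = \<one>"
    using type_ring_homD(1,4)[OF f] x by (simp add: one_pCons hom_eval_pCons)
  then show ?thesis
    unfolding type_ring_hom_def using hom_eval_closed hom_eval_add hom_eval_mult by blast
qed

end

lemma add_nat_pow_prime:
  fixes f :: "'c::comm_ring_1 \<Rightarrow> 'a"
  assumes f: "type_ring_hom f" and char: "f (of_nat p) = \<zero>" and p: "prime p"
    and x: "x \<in> carrier R" and y: "y \<in> carrier R"
  shows "(x \<oplus> y) [^] p = x [^] p \<oplus> y [^] p"
proof -
  define F where "F = hom_eval (hom_eval f x) y"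
  define Xa where "Xa = ([:[:0, 1:]:] :: 'c poly poly)"
  define Xb where "Xb = ([:0, 1:] :: 'c poly poly)"
  have F: "type_ring_hom F"
    unfolding F_def using f x y by (intro type_ring_hom_hom_eval)
  have FX: "F Xa = x" and FY: "F Xb = y" and Fp: "F (of_nat p) = \<zero>"
    using f x y char type_ring_hom_hom_eval[OF f x]
    by (simp_all add: F_def Xa_def Xb_def hom_eval_const hom_eval_X hom_eval_of_nat)
  obtain g where "(Xa + Xb) ^ p = Xa ^ p + Xb ^ p + of_nat p * g"
    using binomial_prime_power[OF p] by blast
  from arg_cong[where f = F, OF this] show ?thesis
    using x y type_ring_homD(1)[OF F] by (simp add: type_ring_hom_simps[OF F] FX FY Fp)
qed

end

lemma (in domain) eq_or_swap_if_same_sum_prod: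
  assumes closed: "u \<in> carrier R" "v \<in> carrier R" "s \<in> carrier R" "t \<in> carrier R"
    and sum: "u \<oplus> v = s \<oplus> t" and prod: "u \<otimes> v = s \<otimes> t"
  shows "(u = s \<and> v = t) \<or> (u = t \<and> v = s)"
proof -
  have "(u \<ominus> s) \<otimes> (u \<ominus> t) = u \<otimes> u \<ominus> u \<otimes> (s \<oplus> t) \<oplus> s \<otimes> t"
    using closed by algebra
  also have "\<dots> = u \<otimes> u \<ominus> u \<otimes> (u \<oplus> v) \<oplus> u \<otimes> v"
    using sum prod by simp
  also have "\<dots> = \<zero>"
    using closed by algebra
  finally have "u = s \<or> u = t"
    using closed by (simp add: integral_iff)
  moreover have "v = t" if "u = s"
    using sum closed that by (metis a_comm add.right_cancel)
  moreover have "v = s" if "u = t"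
    using sum closed that by (metis a_comm add.right_cancel)
  ultimately show ?thesis
    by blast
qed

lemma (in algebraically_closed) exists_root_monic:
  assumes cs: "set cs \<subseteq> carrier L" and ne: "cs \<noteq> []"
  shows "\<exists>x\<in>carrier L. eval (\<one> # cs) x = \<zero>"
proof -
  have P: "\<one> # cs \<in> carrier (poly_ring L)"
    unfolding univ_poly_def polynomial_def using cs by auto
  then have "size (roots (\<one> # cs)) = length cs"
    using roots_over_carrier[OF P] unfolding splitted_def by simp
  then have "roots (\<one> # cs) \<noteq> {#}"
    using ne by auto
  then obtain x where "x \<in># roots (\<one> # cs)"
    by blast
  then have "is_root (\<one> # cs) x"
    using roots_mem_iff_is_root[OF P] by auto
  then show ?thesis
    unfolding is_root_def by auto
qed

locale alg_closed_char = algebraically_closed L for L (structure) +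
  fixes p :: nat and h :: "int \<Rightarrow> 'a"
  assumes prime_p: "prime p"
    and h_closed [simp]: "h n \<in> carrier L"
    and h_add: "h (m + n) = h m \<oplus> h n"
    and h_mult: "h (m * n) = h m \<otimes> h n"
    and h_one: "h 1 = \<one>"
    and h_eq_zero_iff: "h n = \<zero> \<longleftrightarrow> int p dvd n"
begin

lemma type_ring_hom_h: "type_ring_hom h"
  unfolding type_ring_hom_def using h_add h_mult h_one by auto

lemmas h_simps = type_ring_hom_simps[OF type_ring_hom_h]

lemma h_eq_iff: "h m = h n \<longleftrightarrow> [m = n] (mod int p)"
  using h_eq_zero_iff[of "m - n"] by (simp add: h_simps cong_iff_dvd_diff)

definition frob :: "'a \<Rightarrow> 'a" where
  "frob x = x [^] p"

lemma frob_closed [simp]: "x \<in> carrier L \<Longrightarrow> frob x \<in> carrier L"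
  unfolding frob_def by simp

lemma frob_add: "x \<in> carrier L \<Longrightarrow> y \<in> carrier L \<Longrightarrow> frob (x \<oplus> y) = frob x \<oplus> frob y"
  unfolding frob_def using add_nat_pow_prime[OF type_ring_hom_h _ prime_p] h_eq_zero_iff by simp

lemma frob_mult: "x \<in> carrier L \<Longrightarrow> y \<in> carrier L \<Longrightarrow> frob (x \<otimes> y) = frob x \<otimes> frob y"
  unfolding frob_def by (simp add: nat_pow_distrib)

lemma frob_zero [simp]: "frob \<zero> = \<zero>"
  unfolding frob_def using prime_gt_0_nat[OF prime_p] by (simp add: nat_pow_zero)

lemma frob_one [simp]: "frob \<one> = \<one>"
  unfolding frob_def by simp

lemma frob_uminus: "x \<in> carrier L \<Longrightarrow> frob (\<ominus> x) = \<ominus> frob x"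
  using frob_add[of "\<ominus> x" x] by (intro minus_equality[symmetric]) (auto simp: l_neg)

lemma frob_diff: "x \<in> carrier L \<Longrightarrow> y \<in> carrier L \<Longrightarrow> frob (x \<ominus> y) = frob x \<ominus> frob y"
  by (simp add: a_minus_def frob_add frob_uminus)

lemma frob_power: "x \<in> carrier L \<Longrightarrow> frob (x [^] (k::nat)) = frob x [^] k"
  by (induction k) (auto simp: frob_mult)

lemma frob_h [simp]: "frob (h n) = h n"
proof -
  have "frob (h (int k)) = h (int k)" for k
  proof (induction k)
    case (Suc k)
    have "h (int (Suc k)) = h (int k) \<oplus> \<one>"
      using h_add[of "int k" 1] by (simp add: h_one add.commute)
    then show ?case
      using Suc by (simp add: frob_add)
  qed (simp add: h_simps)
  moreover have "h n = h (int (nat (n mod int p)))"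
    using prime_gt_0_nat[OF prime_p] by (simp add: h_eq_iff cong_mod_right)
  ultimately show ?thesis
    by metis
qed

lemma frob_inj:
  assumes x: "x \<in> carrier L" and y: "y \<in> carrier L" and eq: "frob x = frob y"
  shows "x = y"
proof -
  have "(x \<ominus> y) [^] p = \<zero>"
    using eq x y by (simp flip: frob_def add: frob_diff)
  then have "x \<ominus> y \<notin> Units L"
    using Units_pow_closed[of "x \<ominus> y" p] field_Units by auto
  then have "x \<ominus> y = \<zero>"
    using x y field_Units by auto
  then show ?thesis
    using x y by simp
qed

text \<open>\<open>P\<close> is \<open>X\<^sup>p - X\<close> in the list representation of polynomials (leading coefficient first).\<close>
lemma frob_fixed_points_card:
  shows "finite {x \<in> carrier L. frob x = x}" and "card {x \<in> carrier L. frob x = x} \<le> p"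
proof -
  define P where "P = (\<one> # replicate (p - 2) \<zero>) @ [\<ominus> \<one>, \<zero>]"
  have P: "P \<in> carrier (poly_ring L)"
    unfolding P_def univ_poly_def polynomial_def by auto
  have p2: "p \<ge> 2"
    using prime_ge_2_nat[OF prime_p] .
  have eval_P: "eval P y = frob y \<ominus> y" if y: "y \<in> carrier L" for y
  proof -
    have "eval P y = y [^] (p - 2) \<otimes> y [^] (2::nat) \<oplus> eval [\<ominus> \<one>, \<zero>] y"
      unfolding P_def using y eval_replicate[of "[]" y "p - 2"]
      by (subst eval_append) (auto simp: numeral_2_eq_2)
    also have "y [^] (p - 2) \<otimes> y [^] (2::nat) = frob y"
      unfolding frob_def using y p2 by (metis nat_pow_mult le_add_diff_inverse2)
    finally show ?thesis
      using y by (simp add: a_minus_def l_minus)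
  qed
  have roots: "{x \<in> carrier L. frob x = x} \<subseteq> set_mset (roots P)"
  proof
    fix y assume "y \<in> {x \<in> carrier L. frob x = x}"
    then have y: "y \<in> carrier L" and "frob y = y"
      by auto
    then have "is_root P y"
      unfolding is_root_def P_def using eval_P[OF y] by (simp add: P_def)
    then show "y \<in> set_mset (roots P)"
      using roots_mem_iff_is_root[OF P] by auto
  qed
  then show "finite {x \<in> carrier L. frob x = x}"
    using finite_subset by blast
  have "card {x \<in> carrier L. frob x = x} \<le> card (set_mset (roots P))"
    using roots by (intro card_mono) auto
  also have "\<dots> = size (mset_set (set_mset (roots P)))"
    by simp
  also have "\<dots> \<le> size (roots P)"
    by (intro size_mset_mono mset_set_set_mset_msubset)
  also have "\<dots> \<le> p"
    using size_roots_le_degree[OF P] p2 by (simp add: P_def)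
  finally show "card {x \<in> carrier L. frob x = x} \<le> p" .
qed

text \<open>The \<open>p\<close> distinct elements \<open>h 0, \<dots>, h (p - 1)\<close> are fixed already.\<close>
lemma frob_fixed_imp_int:
  assumes x: "x \<in> carrier L" and fixed: "frob x = x"
  shows "\<exists>n. x = h n"
proof -
  define S where "S = (\<lambda>i. h (int i)) ` {..<p}"
  have "inj_on (\<lambda>i. h (int i)) {..<p}"
  proof (rule inj_onI)
    fix i j assume "i \<in> {..<p}" "j \<in> {..<p}" "h (int i) = h (int j)"
    then show "i = j"
      by (simp add: h_eq_iff cong_int_iff cong_less_modulus_unique_nat)
  qed
  then have "card {x \<in> carrier L. frob x = x} \<le> card S"
    unfolding S_def using frob_fixed_points_card(2) by (simp add: card_image)
  moreover have sub: "S \<subseteq> {x \<in> carrier L. frob x = x}"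
    unfolding S_def by auto
  ultimately have "card S = card {x \<in> carrier L. frob x = x}"
    using card_mono[OF frob_fixed_points_card(1) sub] by simp
  then have "S = {x \<in> carrier L. frob x = x}"
    by (rule card_subset_eq[OF frob_fixed_points_card(1) sub])
  then show ?thesis
    using x fixed unfolding S_def by blast
qed


lemma frob_permutes_others_if_fixes_one:
  assumes closed: "u1 \<in> carrier L" "u2 \<in> carrier L" "u3 \<in> carrier L"
    and fixed: "frob u1 = u1"
    and e1: "frob (u1 \<oplus> u2 \<oplus> u3) = u1 \<oplus> u2 \<oplus> u3"
    and e2: "frob (u1 \<otimes> u2 \<oplus> u1 \<otimes> u3 \<oplus> u2 \<otimes> u3) = u1 \<otimes> u2 \<oplus> u1 \<otimes> u3 \<oplus> u2 \<otimes> u3"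
  shows "(frob u2 = u2 \<and> frob u3 = u3) \<or> (frob u2 = u3 \<and> frob u3 = u2)"
proof -
  have sum: "frob u2 \<oplus> frob u3 = u2 \<oplus> u3"
    using e1 closed fixed by (simp add: frob_add a_assoc)
  then have distr: "u1 \<otimes> frob u2 \<oplus> u1 \<otimes> frob u3 = u1 \<otimes> u2 \<oplus> u1 \<otimes> u3"
    using closed by (simp flip: r_distr)
  have "frob u2 \<otimes> frob u3 \<oplus> (u1 \<otimes> u2 \<oplus> u1 \<otimes> u3)
      = u1 \<otimes> frob u2 \<oplus> u1 \<otimes> frob u3 \<oplus> frob u2 \<otimes> frob u3"
    unfolding distr[symmetric] using closed by (simp add: a_comm[of "frob u2 \<otimes> frob u3"])
  also have "\<dots> = frob (u1 \<otimes> u2 \<oplus> u1 \<otimes> u3 \<oplus> u2 \<otimes> u3)"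
    using closed fixed by (simp add: frob_add frob_mult)
  also have "\<dots> = u2 \<otimes> u3 \<oplus> (u1 \<otimes> u2 \<oplus> u1 \<otimes> u3)"
    using e2 closed by (simp add: a_comm[of "u2 \<otimes> u3"])
  finally have prod: "frob u2 \<otimes> frob u3 = u2 \<otimes> u3"
    using closed by simp
  show ?thesis
    using eq_or_swap_if_same_sum_prod[OF _ _ _ _ sum prod] closed by auto
qed

lemma e1_sq_eq_3e2_if_frob_fixes_one:
  assumes closed: "u1 \<in> carrier L" "u2 \<in> carrier L" "u3 \<in> carrier L"
    and fixed: "frob u1 = u1"
    and e1: "frob (u1 \<oplus> u2 \<oplus> u3) = u1 \<oplus> u2 \<oplus> u3"
    and e2: "frob (u1 \<otimes> u2 \<oplus> u1 \<otimes> u3 \<oplus> u2 \<otimes> u3) = u1 \<otimes> u2 \<oplus> u1 \<otimes> u3 \<oplus> u2 \<otimes> u3"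
    and twisted: "u1 \<otimes> frob u1 \<oplus> u2 \<otimes> frob u2 \<oplus> u3 \<otimes> frob u3 = u1 \<otimes> u2 \<oplus> u1 \<otimes> u3 \<oplus> u2 \<otimes> u3"
  shows "(u1 \<oplus> u2 \<oplus> u3) \<otimes> (u1 \<oplus> u2 \<oplus> u3) \<ominus> (\<one> \<oplus> \<one> \<oplus> \<one>) \<otimes> (u1 \<otimes> u2 \<oplus> u1 \<otimes> u3 \<oplus> u2 \<otimes> u3) = \<zero>"
proof -
  consider "frob u2 = u2" "frob u3 = u3" | "frob u2 = u3" "frob u3 = u2"
    using frob_permutes_others_if_fixes_one[OF closed fixed e1 e2] by blast
  then show ?thesis
  proof cases
    case 1
    then have "u1 \<otimes> u1 \<oplus> u2 \<otimes> u2 \<oplus> u3 \<otimes> u3 = u1 \<otimes> u2 \<oplus> u1 \<otimes> u3 \<oplus> u2 \<otimes> u3"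
      using twisted fixed by simp
    moreover have "(u1 \<oplus> u2 \<oplus> u3) \<otimes> (u1 \<oplus> u2 \<oplus> u3) \<ominus> (\<one> \<oplus> \<one> \<oplus> \<one>) \<otimes> (u1 \<otimes> u2 \<oplus> u1 \<otimes> u3 \<oplus> u2 \<otimes> u3)
        = (u1 \<otimes> u1 \<oplus> u2 \<otimes> u2 \<oplus> u3 \<otimes> u3) \<ominus> (u1 \<otimes> u2 \<oplus> u1 \<otimes> u3 \<oplus> u2 \<otimes> u3)"
      using closed by algebra
    ultimately show ?thesis
      using closed by simp
  next
    case 2
    then have twisted': "u1 \<otimes> u1 \<oplus> u2 \<otimes> u3 \<oplus> u3 \<otimes> u2 = u1 \<otimes> u2 \<oplus> u1 \<otimes> u3 \<oplus> u2 \<otimes> u3"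
      using twisted fixed by simp
    have "(u1 \<ominus> u2) \<otimes> (u1 \<ominus> u3)
        = (u1 \<otimes> u1 \<oplus> u2 \<otimes> u3 \<oplus> u3 \<otimes> u2) \<ominus> (u1 \<otimes> u2 \<oplus> u1 \<otimes> u3 \<oplus> u2 \<otimes> u3)"
      using closed by algebra
    also have "\<dots> = \<zero>"
      using twisted' closed by simp
    finally have "u1 = u2 \<or> u1 = u3"
      using closed by (simp add: integral_iff)
    then have "u2 = u1 \<and> u3 = u1"
      using 2 fixed by auto
    moreover have "(u1 \<oplus> u1 \<oplus> u1) \<otimes> (u1 \<oplus> u1 \<oplus> u1) \<ominus> (\<one> \<oplus> \<one> \<oplus> \<one>) \<otimes> (u1 \<otimes> u1 \<oplus> u1 \<otimes> u1 \<oplus> u1 \<otimes> u1) = \<zero>"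
      using closed by algebra
    ultimately show ?thesis
      by simp
  qed
qed

lemma frob_swap_eq:
  assumes closed: "u \<in> carrier L" "v \<in> carrier L"
    and swap: "frob u = v" "frob v = u" and fixed: "frob (u \<oplus> u \<oplus> v) = u \<oplus> u \<oplus> v"
  shows "u = v"
proof -
  have "v \<ominus> u = (v \<oplus> v \<oplus> u) \<ominus> (u \<oplus> u \<oplus> v)"
    using closed by algebra
  also have "\<dots> = \<zero>"
    using fixed swap closed by (simp add: frob_add)
  finally have "v = u"
    using closed by simp
  then show ?thesis ..
qed

end

text \<open>\<open>X1, X2, X3\<close> stand for three roots of a depressed monic quartic, whose fourth root is then
  \<open>X4\<close>; \<open>C2, C1, C0\<close> are the coefficients of \<open>(Xt - X1)(Xt - X2)(Xt - X3)(Xt - X4)\<close>.\<close>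
definition X1 :: "int poly poly poly poly" where "X1 = [:[:[:[:0, 1:]:]:]:]"
definition X2 :: "int poly poly poly poly" where "X2 = [:[:[:0, 1:]:]:]"
definition X3 :: "int poly poly poly poly" where "X3 = [:[:0, 1:]:]"
definition Xt :: "int poly poly poly poly" where "Xt = [:0, 1:]"
definition X4 :: "int poly poly poly poly" where "X4 = - (X1 + X2 + X3)"

definition C2 :: "int poly poly poly poly" where
  "C2 = X1 * X2 + X1 * X3 + X1 * X4 + X2 * X3 + X2 * X4 + X3 * X4"
definition C1 :: "int poly poly poly poly" where
  "C1 = - (X1 * X2 * X3 + X1 * X2 * X4 + X1 * X3 * X4 + X2 * X3 * X4)"
definition C0 :: "int poly poly poly poly" where
  "C0 = X1 * X2 * X3 * X4"

context alg_closed_char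
begin

definition eval4 :: "'a \<Rightarrow> 'a \<Rightarrow> 'a \<Rightarrow> 'a \<Rightarrow> int poly poly poly poly \<Rightarrow> 'a" where
  "eval4 x y z t = hom_eval (hom_eval (hom_eval (hom_eval h x) y) z) t"

context
  fixes x y z t
  assumes closed: "x \<in> carrier L" "y \<in> carrier L" "z \<in> carrier L" "t \<in> carrier L"
begin

lemma type_ring_hom_eval4: "type_ring_hom (eval4 x y z t)"
  unfolding eval4_def using closed by (intro type_ring_hom_hom_eval type_ring_hom_h)

lemma eval4_vars: "eval4 x y z t X1 = x" "eval4 x y z t X2 = y" "eval4 x y z t X3 = z"
  "eval4 x y z t Xt = t" "eval4 x y z t (of_int n) = h n"
proof -
  have homs: "type_ring_hom (hom_eval h x)" "type_ring_hom (hom_eval (hom_eval h x) y)"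
    "type_ring_hom (hom_eval (hom_eval (hom_eval h x) y) z)"
    using closed by (intro type_ring_hom_hom_eval type_ring_hom_h; simp)+
  note const = hom_eval_const[OF type_ring_hom_h closed(1)] hom_eval_const[OF homs(1) closed(2)]
    hom_eval_const[OF homs(2) closed(3)] hom_eval_const[OF homs(3) closed(4)]
  note var = hom_eval_X[OF type_ring_hom_h closed(1)] hom_eval_X[OF homs(1) closed(2)]
    hom_eval_X[OF homs(2) closed(3)] hom_eval_X[OF homs(3) closed(4)]
  show "eval4 x y z t X1 = x" "eval4 x y z t X2 = y" "eval4 x y z t X3 = z" "eval4 x y z t Xt = t"
    by (simp_all add: eval4_def X1_def X2_def X3_def Xt_def const var)
  show "eval4 x y z t (of_int n) = h n"
    by (simp add: eval4_def of_int_poly const)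
qed

lemmas eval4_simps = type_ring_hom_simps[OF type_ring_hom_eval4] eval4_vars

end

lemma cubic_factor:
  assumes u: "u1 \<in> carrier L" "u2 \<in> carrier L" "u3 \<in> carrier L" and v: "v \<in> carrier L"
  shows "v [^] (3::nat) \<ominus> (u1 \<oplus> u2 \<oplus> u3) \<otimes> v [^] (2::nat) \<oplus> (u1 \<otimes> u2 \<oplus> u1 \<otimes> u3 \<oplus> u2 \<otimes> u3) \<otimes> v
      \<ominus> u1 \<otimes> u2 \<otimes> u3 = (v \<ominus> u1) \<otimes> (v \<ominus> u2) \<otimes> (v \<ominus> u3)"
proof -
  have "eval4 u1 u2 u3 v (Xt ^ 3 - (X1 + X2 + X3) * Xt ^ 2 + (X1 * X2 + X1 * X3 + X2 * X3) * Xt - X1 * X2 * X3)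
      = eval4 u1 u2 u3 v ((Xt - X1) * (Xt - X2) * (Xt - X3))"
    by (rule arg_cong[where f = "eval4 u1 u2 u3 v"]) Groebner_Basis.algebra
  then show ?thesis
    by (simp only: eval4_simps[OF u v])
qed

text \<open>\<open>x\<close> is a root of the quartic, \<open>y\<close> one of the cubic cofactor of \<open>t - x\<close>, and \<open>z\<close> one of the
  quadratic cofactor of \<open>t - y\<close> in that; the lists are these cofactors.\<close>
lemma monic_quartic_split:
  assumes PQR: "P \<in> carrier L" "Q \<in> carrier L" "R \<in> carrier L"
  obtains x y z where "x \<in> carrier L" "y \<in> carrier L" "z \<in> carrier L"
    "P = eval4 x y z \<zero> C2" "Q = eval4 x y z \<zero> C1" "R = eval4 x y z \<zero> C0"
proof -
  obtain x where x: "x \<in> carrier L" and ex: "eval [\<one>, \<zero>, P, Q, R] x = \<zero>"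
    using exists_root_monic[of "[\<zero>, P, Q, R]"] PQR by auto
  obtain y where y: "y \<in> carrier L"
    and ey: "eval [\<one>, x, x \<otimes> x \<oplus> P, x \<otimes> x \<otimes> x \<oplus> P \<otimes> x \<oplus> Q] y = \<zero>"
    using exists_root_monic[of "[x, x \<otimes> x \<oplus> P, x \<otimes> x \<otimes> x \<oplus> P \<otimes> x \<oplus> Q]"] PQR x by auto
  obtain z where z: "z \<in> carrier L" and ez: "eval [\<one>, x \<oplus> y, x \<otimes> x \<oplus> x \<otimes> y \<oplus> y \<otimes> y \<oplus> P] z = \<zero>"
    using exists_root_monic[of "[x \<oplus> y, x \<otimes> x \<oplus> x \<otimes> y \<oplus> y \<otimes> y \<oplus> P]"] PQR x y by auto
  let ?ev = "eval4 x y z \<zero>"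
  note ev_simps = eval4_simps[OF x y z zero_closed]
  have P: "P = ?ev C2"
  proof -
    have "z \<otimes> z \<oplus> (x \<oplus> y) \<otimes> z \<oplus> (x \<otimes> x \<oplus> x \<otimes> y \<oplus> y \<otimes> y) \<oplus> P = \<zero>"
      using ez x y z PQR by (simp add: numeral_2_eq_2 a_assoc)
    then have "P = \<ominus> (z \<otimes> z \<oplus> (x \<oplus> y) \<otimes> z \<oplus> (x \<otimes> x \<oplus> x \<otimes> y \<oplus> y \<otimes> y))"
      using x y z PQR by (intro minus_equality[symmetric]) (simp_all add: a_comm)
    also have "\<dots> = ?ev (- (X3 * X3 + (X1 + X2) * X3 + (X1 * X1 + X1 * X2 + X2 * X2)))"
      by (simp only: ev_simps)
    also have "\<dots> = ?ev C2"
      by (rule arg_cong[where f = ?ev]) (unfold C2_def X4_def, Groebner_Basis.algebra)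
    finally show ?thesis .
  qed
  have Q: "Q = ?ev C1"
  proof -
    have "y \<otimes> y \<otimes> y \<oplus> x \<otimes> y \<otimes> y \<oplus> (x \<otimes> x \<oplus> P) \<otimes> y \<oplus> (x \<otimes> x \<otimes> x \<oplus> P \<otimes> x) \<oplus> Q = \<zero>"
      using ey x y z PQR by (simp add: numeral_eq_Suc a_assoc m_assoc)
    then have "Q = \<ominus> (y \<otimes> y \<otimes> y \<oplus> x \<otimes> y \<otimes> y \<oplus> (x \<otimes> x \<oplus> P) \<otimes> y \<oplus> (x \<otimes> x \<otimes> x \<oplus> P \<otimes> x))"
      using x y z PQR by (intro minus_equality[symmetric]) (simp_all add: a_comm)
    also have "\<dots> = ?ev (- (X2 * X2 * X2 + X1 * X2 * X2 + (X1 * X1 + C2) * X2 + (X1 * X1 * X1 + C2 * X1)))"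
      unfolding P by (simp only: ev_simps)
    also have "\<dots> = ?ev C1"
      by (rule arg_cong[where f = ?ev]) (unfold C2_def C1_def X4_def, Groebner_Basis.algebra)
    finally show ?thesis .
  qed
  have R: "R = ?ev C0"
  proof -
    have "x \<otimes> x \<otimes> x \<otimes> x \<oplus> P \<otimes> x \<otimes> x \<oplus> Q \<otimes> x \<oplus> R = \<zero>"
      using ex x y z PQR by (simp add: numeral_eq_Suc a_assoc m_assoc)
    then have "R = \<ominus> (x \<otimes> x \<otimes> x \<otimes> x \<oplus> P \<otimes> x \<otimes> x \<oplus> Q \<otimes> x)"
      using x y z PQR by (intro minus_equality[symmetric]) (simp_all add: a_comm)
    also have "\<dots> = ?ev (- (X1 * X1 * X1 * X1 + C2 * X1 * X1 + C1 * X1))"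
      unfolding P Q by (simp only: ev_simps)
    also have "\<dots> = ?ev C0"
      by (rule arg_cong[where f = ?ev]) (unfold C2_def C1_def C0_def X4_def, Groebner_Basis.algebra)
    finally show ?thesis .
  qed
  show ?thesis
    using that x y z P Q R by blast
qed

lemma quartic_split:
  fixes a c d e :: int
  assumes a: "\<not> int p dvd a"
  obtains x y z where "x \<in> carrier L" "y \<in> carrier L" "z \<in> carrier L"
    "h c = h a \<otimes> eval4 x y z \<zero> C2" "h d = h a \<otimes> eval4 x y z \<zero> C1" "h e = h a \<otimes> eval4 x y z \<zero> C0"
proof -
  have unit: "h a \<in> Units L"
    using a h_eq_zero_iff field_Units by auto
  then have closed: "inv (h a) \<otimes> h u \<in> carrier L" for u
    by simp
  obtain x y z where "x \<in> carrier L" "y \<in> carrier L" "z \<in> carrier L"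
    "inv (h a) \<otimes> h c = eval4 x y z \<zero> C2" "inv (h a) \<otimes> h d = eval4 x y z \<zero> C1"
    "inv (h a) \<otimes> h e = eval4 x y z \<zero> C0"
    using monic_quartic_split[OF closed closed closed] by blast
  moreover have "h u = h a \<otimes> (inv (h a) \<otimes> h u)" for u
    using unit by (simp add: m_assoc[symmetric] Units_r_inv)
  ultimately show ?thesis
    using that by metis
qed

end

lemma derangement_fixes_a_pairing:
  fixes P :: "'a \<Rightarrow> 'a \<Rightarrow> 'b"
  assumes distinct: "x \<noteq> y" "x \<noteq> z" "x \<noteq> w" "y \<noteq> z" "y \<noteq> w" "z \<noteq> w"
    and commute: "\<And>u v. u \<in> {x, y, z, w} \<Longrightarrow> v \<in> {x, y, z, w} \<Longrightarrow> P u v = P v u"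
    and pairings: "P z w = P x y" "P y w = P x z" "P y z = P x w"
    and perm: "\<And>t. t \<in> {x, y, z, w} \<Longrightarrow> \<sigma> t \<in> {x, y, z, w}"
    and inj: "\<sigma> x \<noteq> \<sigma> y" "\<sigma> x \<noteq> \<sigma> z" "\<sigma> x \<noteq> \<sigma> w" "\<sigma> y \<noteq> \<sigma> z" "\<sigma> y \<noteq> \<sigma> w" "\<sigma> z \<noteq> \<sigma> w"
    and moved: "\<sigma> x \<noteq> x" "\<sigma> y \<noteq> y" "\<sigma> z \<noteq> z" "\<sigma> w \<noteq> w"
  shows "P (\<sigma> x) (\<sigma> y) = P x y \<or> P (\<sigma> x) (\<sigma> z) = P x z \<or> P (\<sigma> x) (\<sigma> w) = P x w"
proof -
  have "\<sigma> x \<in> {x, y, z, w}" "\<sigma> y \<in> {x, y, z, w}" "\<sigma> z \<in> {x, y, z, w}" "\<sigma> w \<in> {x, y, z, w}"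
    using perm by auto
  then show ?thesis
    using distinct inj moved pairings commute[of x y] commute[of z w] commute[of x z] commute[of y w]
      commute[of x w] commute[of y z]
    by auto
qed

text \<open>A depressed quartic \<open>a t\<^sup>4 + c t\<^sup>2 + d t + e\<close> over \<open>\<int>\<close> whose reduction mod \<open>p\<close> has the roots
  \<open>x, y, z\<close> and \<open>w = -(x + y + z)\<close> in \<open>L\<close>.\<close>
locale depressed_quartic = alg_closed_char +
  fixes a c d e :: int and x y z :: 'a
  assumes a: "\<not> int p dvd a"
    and roots_closed: "x \<in> carrier L" "y \<in> carrier L" "z \<in> carrier L"
    and c_eq: "h c = h a \<otimes> eval4 x y z \<zero> C2"
    and d_eq: "h d = h a \<otimes> eval4 x y z \<zero> C1"
    and e_eq: "h e = h a \<otimes> eval4 x y z \<zero> C0"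
begin

abbreviation ev :: "int poly poly poly poly \<Rightarrow> 'a" where
  "ev \<equiv> eval4 x y z \<zero>"

abbreviation w :: 'a where
  "w \<equiv> ev X4"

lemmas ev_simps = eval4_simps[OF roots_closed zero_closed]

lemma w_closed: "w \<in> carrier L"
  using type_ring_homD(1)[OF type_ring_hom_eval4[OF roots_closed zero_closed]] .

lemma h_a_nonzero: "h a \<noteq> \<zero>"
  using a h_eq_zero_iff by simp

definition quartic :: "'a \<Rightarrow> 'a" where
  "quartic t = h a \<otimes> t [^] (4::nat) \<oplus> h c \<otimes> t [^] (2::nat) \<oplus> h d \<otimes> t \<oplus> h e"

lemma quartic_factor:
  assumes t: "t \<in> carrier L"
  shows "quartic t = h a \<otimes> ((t \<ominus> x) \<otimes> (t \<ominus> y) \<otimes> (t \<ominus> z) \<otimes> (t \<ominus> w))"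
proof -
  note simps = eval4_simps[OF roots_closed t]
  have coeffs: "ev C2 = eval4 x y z t C2" "ev C1 = eval4 x y z t C1" "ev C0 = eval4 x y z t C0"
    "w = eval4 x y z t X4"
    by (simp_all only: C2_def C1_def C0_def X4_def ev_simps simps)
  have "quartic t = h a \<otimes> (t [^] (4::nat) \<oplus> ev C2 \<otimes> t [^] (2::nat) \<oplus> ev C1 \<otimes> t \<oplus> ev C0)"
    using t roots_closed type_ring_homD(1)[OF type_ring_hom_eval4[OF roots_closed zero_closed]]
    by (simp add: quartic_def c_eq d_eq e_eq r_distr m_assoc)
  also have "\<dots> = eval4 x y z t (of_int a * (Xt ^ 4 + C2 * Xt ^ 2 + C1 * Xt + C0))"
    unfolding coeffs by (simp only: simps)
  also have "\<dots> = eval4 x y z t (of_int a * ((Xt - X1) * (Xt - X2) * (Xt - X3) * (Xt - X4)))"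
    by (rule arg_cong[where f = "eval4 x y z t"]) (unfold C2_def C1_def C0_def X4_def, Groebner_Basis.algebra)
  also have "\<dots> = h a \<otimes> ((t \<ominus> x) \<otimes> (t \<ominus> y) \<otimes> (t \<ominus> z) \<otimes> (t \<ominus> w))"
    unfolding coeffs by (simp only: simps)
  finally show ?thesis .
qed

lemma quartic_eq_zero_iff:
  assumes "t \<in> carrier L"
  shows "quartic t = \<zero> \<longleftrightarrow> t \<in> {x, y, z, w}"
  using assms roots_closed w_closed h_a_nonzero by (simp add: quartic_factor integral_iff)

lemma frob_root:
  assumes t: "t \<in> {x, y, z, w}"
  shows "frob t \<in> {x, y, z, w}"
proof -
  have t_closed: "t \<in> carrier L"
    using t roots_closed w_closed by auto
  have "quartic (frob t) = frob (quartic t)"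
    using t_closed by (simp add: quartic_def frob_add frob_mult frob_power)
  also have "quartic t = \<zero>"
    using t t_closed quartic_eq_zero_iff by blast
  finally show ?thesis
    using t_closed quartic_eq_zero_iff[of "frob t"] by simp

qed

definition pair_sq :: "'a \<Rightarrow> 'a \<Rightarrow> 'a" where
  "pair_sq u v = h a \<otimes> h a \<otimes> (u \<oplus> v) \<otimes> (u \<oplus> v)"

text \<open>The roots of the resolvent cubic. As the four roots sum to zero, each of them belongs to
  one of the three splittings of \<open>{x, y, z, w}\<close> into two pairs (see \<open>pair_sq_pairings\<close>).\<close>
abbreviation \<theta>1 :: 'a where "\<theta>1 \<equiv> pair_sq x y"
abbreviation \<theta>2 :: 'a where "\<theta>2 \<equiv> pair_sq x z"
abbreviation \<theta>3 :: 'a where "\<theta>3 \<equiv> pair_sq x w"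

abbreviation A :: "int poly poly poly poly" where "A \<equiv> of_int a"

lemma pair_sq_closed [simp]: "u \<in> carrier L \<Longrightarrow> v \<in> carrier L \<Longrightarrow> pair_sq u v \<in> carrier L"
  unfolding pair_sq_def by simp

lemma pair_sq_commute: "u \<in> carrier L \<Longrightarrow> v \<in> carrier L \<Longrightarrow> pair_sq u v = pair_sq v u"
  unfolding pair_sq_def by (simp add: a_comm)

lemma frob_pair_sq: "u \<in> carrier L \<Longrightarrow> v \<in> carrier L \<Longrightarrow> frob (pair_sq u v) = pair_sq (frob u) (frob v)"
  unfolding pair_sq_def by (simp add: frob_add frob_mult)

lemma theta_closed: "\<theta>1 \<in> carrier L" "\<theta>2 \<in> carrier L" "\<theta>3 \<in> carrier L"
  using roots_closed w_closed by simp_all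

lemma theta_ev: "\<theta>1 = ev (A * A * (X1 + X2) * (X1 + X2))" "\<theta>2 = ev (A * A * (X1 + X3) * (X1 + X3))"
  "\<theta>3 = ev (A * A * (X1 + X4) * (X1 + X4))"
  by (simp_all only: pair_sq_def ev_simps)

lemma pair_sq_pairings: "pair_sq z w = \<theta>1" "pair_sq y w = \<theta>2" "pair_sq y z = \<theta>3"
proof -
  have "ev (A * A * (X3 + X4) * (X3 + X4)) = ev (A * A * (X1 + X2) * (X1 + X2))"
    "ev (A * A * (X2 + X4) * (X2 + X4)) = ev (A * A * (X1 + X3) * (X1 + X3))"
    "ev (A * A * (X2 + X3) * (X2 + X3)) = ev (A * A * (X1 + X4) * (X1 + X4))"
    by (rule arg_cong[where f = ev]; unfold X4_def; Groebner_Basis.algebra)+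
  then show "pair_sq z w = \<theta>1" "pair_sq y w = \<theta>2" "pair_sq y z = \<theta>3"
    unfolding theta_ev by (simp_all only: pair_sq_def ev_simps)
qed

lemma theta_diff:
  "\<theta>1 \<ominus> \<theta>2 = h a \<otimes> h a \<otimes> (y \<ominus> z) \<otimes> (x \<ominus> w)"
  "\<theta>1 \<ominus> \<theta>3 = h a \<otimes> h a \<otimes> (y \<ominus> w) \<otimes> (x \<ominus> z)"
  "\<theta>2 \<ominus> \<theta>3 = h a \<otimes> h a \<otimes> (z \<ominus> w) \<otimes> (x \<ominus> y)"
proof -
  have "ev (A * A * (X1 + X2) * (X1 + X2) - A * A * (X1 + X3) * (X1 + X3)) = ev (A * A * (X2 - X3) * (X1 - X4))"
    "ev (A * A * (X1 + X2) * (X1 + X2) - A * A * (X1 + X4) * (X1 + X4)) = ev (A * A * (X2 - X4) * (X1 - X3))"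
    "ev (A * A * (X1 + X3) * (X1 + X3) - A * A * (X1 + X4) * (X1 + X4)) = ev (A * A * (X3 - X4) * (X1 - X2))"
    by (rule arg_cong[where f = ev]; unfold X4_def; Groebner_Basis.algebra)+
  then show "\<theta>1 \<ominus> \<theta>2 = h a \<otimes> h a \<otimes> (y \<ominus> z) \<otimes> (x \<ominus> w)"
    "\<theta>1 \<ominus> \<theta>3 = h a \<otimes> h a \<otimes> (y \<ominus> w) \<otimes> (x \<ominus> z)"
    "\<theta>2 \<ominus> \<theta>3 = h a \<otimes> h a \<otimes> (z \<ominus> w) \<otimes> (x \<ominus> y)"
    unfolding theta_ev by (simp_all only: ev_simps)
qed

lemma theta_sum: "\<theta>1 \<oplus> \<theta>2 \<oplus> \<theta>3 = h (-2*a*c)"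
proof -
  have "\<theta>1 \<oplus> \<theta>2 \<oplus> \<theta>3 = ev (A * A * (X1 + X2) * (X1 + X2) + A * A * (X1 + X3) * (X1 + X3)
      + A * A * (X1 + X4) * (X1 + X4))"
    unfolding theta_ev by (simp only: ev_simps)
  also have "\<dots> = ev (-2 * A * (A * C2))"
    by (rule arg_cong[where f = ev]) (unfold C2_def X4_def, Groebner_Basis.algebra)
  also have "\<dots> = h (-2*a*c)"
    by (simp only: ev_simps h_simps c_eq)
  finally show ?thesis .
qed

lemma theta_sum_prods: "\<theta>1 \<otimes> \<theta>2 \<oplus> \<theta>1 \<otimes> \<theta>3 \<oplus> \<theta>2 \<otimes> \<theta>3 = h (a^2*c^2 - 4*a^3*e)"
proof -
  have "\<theta>1 \<otimes> \<theta>2 \<oplus> \<theta>1 \<otimes> \<theta>3 \<oplus> \<theta>2 \<otimes> \<theta>3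
      = ev ((A * A * (X1 + X2) * (X1 + X2)) * (A * A * (X1 + X3) * (X1 + X3))
        + (A * A * (X1 + X2) * (X1 + X2)) * (A * A * (X1 + X4) * (X1 + X4))
        + (A * A * (X1 + X3) * (X1 + X3)) * (A * A * (X1 + X4) * (X1 + X4)))"
    unfolding theta_ev by (simp only: ev_simps)
  also have "\<dots> = ev (A^2 * (A * C2)^2 - 4 * A^3 * (A * C0))"
    by (rule arg_cong[where f = ev]) (unfold C2_def C0_def X4_def, Groebner_Basis.algebra)
  also have "\<dots> = h (a^2*c^2 - 4*a^3*e)"
    by (simp only: ev_simps h_simps c_eq e_eq)
  finally show ?thesis .
qed

lemma theta_prod: "\<theta>1 \<otimes> \<theta>2 \<otimes> \<theta>3 = h (a^4*d^2)"
proof -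
  have "\<theta>1 \<otimes> \<theta>2 \<otimes> \<theta>3 = ev ((A * A * (X1 + X2) * (X1 + X2)) * (A * A * (X1 + X3) * (X1 + X3))
      * (A * A * (X1 + X4) * (X1 + X4)))"
    unfolding theta_ev by (simp only: ev_simps)
  also have "\<dots> = ev (A^4 * (A * C1)^2)"
    by (rule arg_cong[where f = ev]) (unfold C1_def X4_def, Groebner_Basis.algebra)
  also have "\<dots> = h (a^4*d^2)"
    by (simp only: ev_simps h_simps d_eq)
  finally show ?thesis .
qed

lemma theta_sum_squares:
  "\<theta>1 [^] (2::nat) \<oplus> \<theta>2 [^] (2::nat) \<oplus> \<theta>3 [^] (2::nat) = h (2*a^2*c^2 + 8*a^3*e)"
proof -
  have "\<theta>1 [^] (2::nat) \<oplus> \<theta>2 [^] (2::nat) \<oplus> \<theta>3 [^] (2::nat)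
      = ev ((A * A * (X1 + X2) * (X1 + X2))^2 + (A * A * (X1 + X3) * (X1 + X3))^2
        + (A * A * (X1 + X4) * (X1 + X4))^2)"
    unfolding theta_ev by (simp only: ev_simps)
  also have "\<dots> = ev (2 * A^2 * (A * C2)^2 + 8 * A^3 * (A * C0))"
    by (rule arg_cong[where f = ev]) (unfold C2_def C0_def X4_def, Groebner_Basis.algebra)
  also have "\<dots> = h (2*a^2*c^2 + 8*a^3*e)"
    by (simp only: ev_simps h_simps c_eq e_eq)
  finally show ?thesis .
qed

definition resolvent :: "'a \<Rightarrow> 'a" where
  "resolvent v = v [^] (3::nat) \<ominus> h (-2*a*c) \<otimes> v [^] (2::nat) \<oplus> h (a^2*c^2 - 4*a^3*e) \<otimes> v
     \<ominus> h (a^4*d^2)"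

lemma resolvent_eq_zero_iff:
  assumes v: "v \<in> carrier L"
  shows "resolvent v = \<zero> \<longleftrightarrow> v \<in> {\<theta>1, \<theta>2, \<theta>3}"
proof -
  have "resolvent v = (v \<ominus> \<theta>1) \<otimes> (v \<ominus> \<theta>2) \<otimes> (v \<ominus> \<theta>3)"
    unfolding resolvent_def theta_sum[symmetric] theta_sum_prods[symmetric] theta_prod[symmetric]
    using cubic_factor[OF theta_closed v] .
  then show ?thesis
    using v theta_closed by (simp add: integral_iff)
qed

lemma resolvent_int: "resolvent (h m) = h (m^3 - (-2*a*c)*m^2 + (a^2*c^2 - 4*a^3*e)*m - a^4*d^2)"
  unfolding resolvent_def by (simp only: h_simps)

lemma frob_theta:
  assumes "v \<in> {\<theta>1, \<theta>2, \<theta>3}"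
  shows "frob v \<in> {\<theta>1, \<theta>2, \<theta>3}"
proof -
  have v: "v \<in> carrier L"
    using assms theta_closed by auto
  have "resolvent (frob v) = frob (resolvent v)"
    using v by (simp add: resolvent_def frob_add frob_diff frob_mult frob_power)
  also have "resolvent v = \<zero>"
    using assms v resolvent_eq_zero_iff by blast
  finally show ?thesis
    using v resolvent_eq_zero_iff[of "frob v"] by simp
qed

lemma resolvent_root_power:
  fixes n :: nat
  assumes v: "v \<in> {\<theta>1, \<theta>2, \<theta>3}"
  shows "v [^] (n + 3) = h (-2*a*c) \<otimes> v [^] (n + 2) \<ominus> h (a^2*c^2 - 4*a^3*e) \<otimes> v [^] (n + 1)
      \<oplus> h (a^4*d^2) \<otimes> v [^] n"
proof -
  have closed: "v \<in> carrier L"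
    using v theta_closed by auto
  have powers: "v [^] (n + 3) = v [^] n \<otimes> v [^] (3::nat)" "v [^] (n + 2) = v [^] n \<otimes> v [^] (2::nat)"
    "v [^] (n + 1) = v [^] n \<otimes> v"
    using closed by (simp_all add: nat_pow_mult)
  have "resolvent v = \<zero>"
    using v closed resolvent_eq_zero_iff by blast
  then have "v [^] n \<otimes> resolvent v = \<zero>"
    using closed by simp
  moreover have "v [^] n \<otimes> resolvent v = v [^] (n + 3) \<ominus> (h (-2*a*c) \<otimes> v [^] (n + 2)
      \<ominus> h (a^2*c^2 - 4*a^3*e) \<otimes> v [^] (n + 1) \<oplus> h (a^4*d^2) \<otimes> v [^] n)"
    unfolding powers resolvent_def using closed h_closed nat_pow_closed by algebra
  ultimately show ?thesis
    using closed by simp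
qed

lemma theta_power_sum: "h (s_seq a c d e n) = \<theta>1 [^] n \<oplus> \<theta>2 [^] n \<oplus> \<theta>3 [^] n"
proof -
  let ?P = "\<lambda>n. h (s_seq a c d e n) = \<theta>1 [^] n \<oplus> \<theta>2 [^] n \<oplus> \<theta>3 [^] n"
  have minus_E2: "h (4*a^3*e - a^2*c^2) = \<ominus> h (a^2*c^2 - 4*a^3*e)"
    using type_ring_hom_uminus[OF type_ring_hom_h, of "a^2*c^2 - 4*a^3*e"] by simp
  have "?P n \<and> ?P (Suc n) \<and> ?P (Suc (Suc n))"
  proof (induction n)
    case 0
    show ?case
      using theta_closed theta_sum theta_sum_squares by (simp add: h_simps numeral_2_eq_2)
  next
    case (Suc n)
    then have IH: "?P n" "?P (Suc n)" "?P (Suc (Suc n))"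
      by blast+
    have "h (s_seq a c d e (Suc (Suc (Suc n)))) = h (-2*a*c) \<otimes> h (s_seq a c d e (Suc (Suc n)))
        \<oplus> \<ominus> h (a^2*c^2 - 4*a^3*e) \<otimes> h (s_seq a c d e (Suc n)) \<oplus> h (a^4*d^2) \<otimes> h (s_seq a c d e n)"
      by (simp only: s_seq.simps h_add h_mult minus_E2)
    also have "\<dots> = \<theta>1 [^] Suc (Suc (Suc n)) \<oplus> \<theta>2 [^] Suc (Suc (Suc n)) \<oplus> \<theta>3 [^] Suc (Suc (Suc n))"
      unfolding IH
      using theta_closed resolvent_root_power[of \<theta>1 n] resolvent_root_power[of \<theta>2 n]
        resolvent_root_power[of \<theta>3 n]
      by (simp add: numeral_3_eq_3 r_distr l_minus minus_add a_ac a_minus_def)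
    finally show ?case
      using IH by blast
  qed
  then show ?thesis
    by blast
qed

lemma theta_frob_power_sum:
  "h (s_seq a c d e (p + 1)) = \<theta>1 \<otimes> frob \<theta>1 \<oplus> \<theta>2 \<otimes> frob \<theta>2 \<oplus> \<theta>3 \<otimes> frob \<theta>3"
  using theta_closed by (simp add: theta_power_sum frob_def m_comm)

lemma frob_fixes_theta_sym:
  "frob (\<theta>1 \<oplus> \<theta>2 \<oplus> \<theta>3) = \<theta>1 \<oplus> \<theta>2 \<oplus> \<theta>3"
  "frob (\<theta>1 \<otimes> \<theta>2 \<oplus> \<theta>1 \<otimes> \<theta>3 \<oplus> \<theta>2 \<otimes> \<theta>3) = \<theta>1 \<otimes> \<theta>2 \<oplus> \<theta>1 \<otimes> \<theta>3 \<oplus> \<theta>2 \<otimes> \<theta>3"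
  unfolding theta_sum theta_sum_prods by simp_all

lemma theta_e1_sq_minus_3e2:
  "(\<theta>1 \<oplus> \<theta>2 \<oplus> \<theta>3) \<otimes> (\<theta>1 \<oplus> \<theta>2 \<oplus> \<theta>3) \<ominus> (\<one> \<oplus> \<one> \<oplus> \<one>) \<otimes> (\<theta>1 \<otimes> \<theta>2 \<oplus> \<theta>1 \<otimes> \<theta>3 \<oplus> \<theta>2 \<otimes> \<theta>3)
    = h (a^2*c^2 + 12*a^3*e)"
proof -
  have "a^2*c^2 + 12*a^3*e = (-2*a*c) * (-2*a*c) - 3 * (a^2*c^2 - 4*a^3*e)"
    by (simp add: algebra_simps power2_eq_square power3_eq_cube)
  then show ?thesis
    unfolding theta_sum theta_sum_prods by (simp only: h_simps)
qed

lemma no_fixed_theta_if_noncube: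
  assumes vanish: "[a^2*c^2 + 12*a^3*e = 0] (mod int p)"
    and noncube: "cubic_nonresidue p (8*a^3*c^3 + 27*a^4*d^2)"
    and v: "v \<in> {\<theta>1, \<theta>2, \<theta>3}"
  shows "frob v \<noteq> v"
proof
  assume "frob v = v"
  moreover have v_closed: "v \<in> carrier L"
    using v theta_closed by auto
  ultimately obtain m where m: "v = h m"
    using frob_fixed_imp_int by blast
  have "resolvent v = \<zero>"
    using v v_closed resolvent_eq_zero_iff by blast
  then have "h (m^3 - (-2*a*c)*m^2 + (a^2*c^2 - 4*a^3*e)*m - a^4*d^2) = \<zero>"
    unfolding m resolvent_int .
  then have "int p dvd m^3 - (-2*a*c)*m^2 + (a^2*c^2 - 4*a^3*e)*m - a^4*d^2"
    using h_eq_zero_iff by blast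
  moreover have "int p dvd a^2*c^2 + 12*a^3*e"
    using vanish by (simp add: cong_0_iff)
  ultimately have "int p dvd 27 * (m^3 - (-2*a*c)*m^2 + (a^2*c^2 - 4*a^3*e)*m - a^4*d^2)
      + 9*m*(a^2*c^2 + 12*a^3*e)"
    by (blast intro: dvd_add dvd_mult)
  also have "\<dots> = (3*m + 2*a*c)^3 - (8*a^3*c^3 + 27*a^4*d^2)"
    by (simp add: algebra_simps power2_eq_square power3_eq_cube power4_eq_xxxx)
  finally have "[(3*m + 2*a*c)^3 = 8*a^3*c^3 + 27*a^4*d^2] (mod int p)"
    by (simp add: cong_iff_dvd_diff)
  then show False
    using noncube unfolding cubic_nonresidue_def cubic_residue_def by blast
qed

text \<open>Since \<open>\<theta>\<^sup>p = frob \<theta>\<close>, the congruence on \<open>s\<^sub>p\<^sub>+\<^sub>1\<close> says that \<open>\<Sum> \<theta>i frob \<theta>i\<close> equals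
  \<open>\<Sum> \<theta>i \<theta>j\<close>; with one \<open>\<theta>i\<close> fixed this forces \<open>(\<Sum> \<theta>i)\<^sup>2 = 3 \<Sum> \<theta>i \<theta>j\<close>, i.e.
  \<open>a\<^sup>2c\<^sup>2 + 12a\<^sup>3e \<equiv> 0\<close>.\<close>
lemma no_fixed_theta_if_power_sum:
  assumes nonvanish: "\<not> [a^2*c^2 + 12*a^3*e = 0] (mod int p)"
    and power_sum: "[s_seq a c d e (p + 1) = a^2*c^2 - 4*a^3*e] (mod int p)"
    and v: "v \<in> {\<theta>1, \<theta>2, \<theta>3}"
  shows "frob v \<noteq> v"
proof
  assume fixed: "frob v = v"
  have closed: "\<theta>1 \<in> carrier L" "\<theta>2 \<in> carrier L" "\<theta>3 \<in> carrier L"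
    by (fact theta_closed)+
  have "\<theta>1 \<otimes> frob \<theta>1 \<oplus> \<theta>2 \<otimes> frob \<theta>2 \<oplus> \<theta>3 \<otimes> frob \<theta>3 = h (s_seq a c d e (p + 1))"
    by (rule theta_frob_power_sum[symmetric])
  also have "\<dots> = h (a^2*c^2 - 4*a^3*e)"
    using power_sum by (simp only: h_eq_iff)
  also have "\<dots> = \<theta>1 \<otimes> \<theta>2 \<oplus> \<theta>1 \<otimes> \<theta>3 \<oplus> \<theta>2 \<otimes> \<theta>3"
    by (rule theta_sum_prods[symmetric])
  finally have twisted: "\<theta>1 \<otimes> frob \<theta>1 \<oplus> \<theta>2 \<otimes> frob \<theta>2 \<oplus> \<theta>3 \<otimes> frob \<theta>3
      = \<theta>1 \<otimes> \<theta>2 \<oplus> \<theta>1 \<otimes> \<theta>3 \<oplus> \<theta>2 \<otimes> \<theta>3" .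
  have nondegenerate: "(\<theta>1 \<oplus> \<theta>2 \<oplus> \<theta>3) \<otimes> (\<theta>1 \<oplus> \<theta>2 \<oplus> \<theta>3)
      \<ominus> (\<one> \<oplus> \<one> \<oplus> \<one>) \<otimes> (\<theta>1 \<otimes> \<theta>2 \<oplus> \<theta>1 \<otimes> \<theta>3 \<oplus> \<theta>2 \<otimes> \<theta>3) \<noteq> \<zero>"
    using nonvanish h_eq_zero_iff by (simp add: theta_e1_sq_minus_3e2 cong_0_iff)
  note e1 = frob_fixes_theta_sym(1) and e2 = frob_fixes_theta_sym(2)
  consider "v = \<theta>1" | "v = \<theta>2" | "v = \<theta>3"
    using v by blast
  then show False
  proof cases
    case 1
    then show False
      using e1_sq_eq_3e2_if_frob_fixes_one[OF closed(1,2,3) _ e1 e2 twisted] fixed nondegenerate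
      by simp
  next
    case 2
    then show False
      using e1_sq_eq_3e2_if_frob_fixes_one[OF closed(2,1,3)] fixed e1 e2 twisted closed nondegenerate
      by (simp add: a_ac m_ac)
  next
    case 3
    then show False
      using e1_sq_eq_3e2_if_frob_fixes_one[OF closed(3,1,2)] fixed e1 e2 twisted closed nondegenerate
      by (simp add: a_ac m_ac)
  qed
qed

context
  assumes no_fixed_theta: "\<And>v. v \<in> {\<theta>1, \<theta>2, \<theta>3} \<Longrightarrow> frob v \<noteq> v"
begin

lemma theta_distinct: "\<theta>1 \<noteq> \<theta>2" "\<theta>1 \<noteq> \<theta>3" "\<theta>2 \<noteq> \<theta>3"
proof -
  have closed: "\<theta>1 \<in> carrier L" "\<theta>2 \<in> carrier L" "\<theta>3 \<in> carrier L"
    by (fact theta_closed)+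
  have perm: "frob \<theta>1 \<in> {\<theta>1, \<theta>2, \<theta>3}" "frob \<theta>2 \<in> {\<theta>1, \<theta>2, \<theta>3}" "frob \<theta>3 \<in> {\<theta>1, \<theta>2, \<theta>3}"
    using frob_theta by auto
  have moved: "frob \<theta>1 \<noteq> \<theta>1" "frob \<theta>2 \<noteq> \<theta>2" "frob \<theta>3 \<noteq> \<theta>3"
    using no_fixed_theta by auto
  note sum_fixed = frob_fixes_theta_sym(1)
  text \<open>If two of the \<open>\<theta>i\<close> coincide, the Frobenius swaps the two distinct values while fixing
    their sum with multiplicities, so they coincide after all.\<close>
  show "\<theta>1 \<noteq> \<theta>2"
  proof
    assume eq: "\<theta>1 = \<theta>2"
    then have "frob \<theta>1 = \<theta>3" "frob \<theta>3 = \<theta>1"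
      using perm moved by auto
    moreover have "frob (\<theta>1 \<oplus> \<theta>1 \<oplus> \<theta>3) = \<theta>1 \<oplus> \<theta>1 \<oplus> \<theta>3"
      using sum_fixed eq by simp
    ultimately show False
      using frob_swap_eq[OF closed(1,3)] moved by auto
  qed
  show "\<theta>1 \<noteq> \<theta>3"
  proof
    assume eq: "\<theta>1 = \<theta>3"
    then have "frob \<theta>1 = \<theta>2" "frob \<theta>2 = \<theta>1"
      using perm moved by auto
    moreover have "frob (\<theta>1 \<oplus> \<theta>1 \<oplus> \<theta>2) = \<theta>1 \<oplus> \<theta>1 \<oplus> \<theta>2"
      using sum_fixed eq closed by (simp add: a_ac)
    ultimately show False
      using frob_swap_eq[OF closed(1,2)] moved by auto
  qed
  show "\<theta>2 \<noteq> \<theta>3"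
  proof
    assume eq: "\<theta>2 = \<theta>3"
    then have "frob \<theta>2 = \<theta>1" "frob \<theta>1 = \<theta>2"
      using perm moved by auto
    moreover have "frob (\<theta>2 \<oplus> \<theta>2 \<oplus> \<theta>1) = \<theta>2 \<oplus> \<theta>2 \<oplus> \<theta>1"
      using sum_fixed eq closed by (simp add: a_ac)
    ultimately show False
      using frob_swap_eq[OF closed(2,1)] moved by auto
  qed
qed

lemma roots_distinct: "x \<noteq> y" "x \<noteq> z" "x \<noteq> w" "y \<noteq> z" "y \<noteq> w" "z \<noteq> w"
proof -
  have "\<theta>1 \<ominus> \<theta>2 \<noteq> \<zero>" "\<theta>1 \<ominus> \<theta>3 \<noteq> \<zero>" "\<theta>2 \<ominus> \<theta>3 \<noteq> \<zero>"
    using theta_distinct theta_closed by simp_all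
  then show "x \<noteq> y" "x \<noteq> z" "x \<noteq> w" "y \<noteq> z" "y \<noteq> w" "z \<noteq> w"
    unfolding theta_diff using roots_closed w_closed by (auto simp: a_minus_def r_neg)
qed

lemma exists_fixed_root: "\<exists>t\<in>{x, y, z, w}. frob t = t"
proof (rule ccontr)
  assume "\<not> (\<exists>t\<in>{x, y, z, w}. frob t = t)"
  then have moved: "frob x \<noteq> x" "frob y \<noteq> y" "frob z \<noteq> z" "frob w \<noteq> w"
    by auto
  have closed: "x \<in> carrier L" "y \<in> carrier L" "z \<in> carrier L" "w \<in> carrier L"
    using roots_closed w_closed by auto
  have "frob x \<noteq> frob y" "frob x \<noteq> frob z" "frob x \<noteq> frob w" "frob y \<noteq> frob z"
    "frob y \<noteq> frob w" "frob z \<noteq> frob w"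
    using frob_inj closed roots_distinct by metis+
  then have "pair_sq (frob x) (frob y) = \<theta>1 \<or> pair_sq (frob x) (frob z) = \<theta>2
      \<or> pair_sq (frob x) (frob w) = \<theta>3"
    using derangement_fixes_a_pairing[of x y z w pair_sq] roots_distinct moved frob_root
      pair_sq_pairings pair_sq_commute closed by auto
  moreover have "frob \<theta>1 = pair_sq (frob x) (frob y)" "frob \<theta>2 = pair_sq (frob x) (frob z)"
    "frob \<theta>3 = pair_sq (frob x) (frob w)"
    using closed frob_pair_sq by auto
  ultimately show False
    using no_fixed_theta by auto

qed

end

lemma simple_root_if_distinct:
  assumes root: "h r \<in> {x, y, z, w}"
    and distinct: "x \<noteq> y" "x \<noteq> z" "x \<noteq> w" "y \<noteq> z" "y \<noteq> w" "z \<noteq> w"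
  shows "\<not> int p dvd 4*a*r^3 + 2*c*r + d"
proof
  assume "int p dvd 4*a*r^3 + 2*c*r + d"
  then have zero: "h (4*a*r^3 + 2*c*r + d) = \<zero>"
    using h_eq_zero_iff by simp
  have at_root: "h (4*a*r^3 + 2*c*r + d) \<noteq> \<zero>"
    if r: "h r = ev T" and factor: "4*A*T^3 + 2*(A*C2)*T + A*C1 = A*((T - U1)*(T - U2)*(T - U3))"
      and ne: "ev T \<noteq> ev U1" "ev T \<noteq> ev U2" "ev T \<noteq> ev U3" for T U1 U2 U3
  proof -
    have "h (4*a*r^3 + 2*c*r + d) = ev (4*A*T^3 + 2*(A*C2)*T + A*C1)"
      by (simp only: h_simps ev_simps c_eq d_eq r)
    also have "\<dots> = h a \<otimes> ((ev T \<ominus> ev U1) \<otimes> (ev T \<ominus> ev U2) \<otimes> (ev T \<ominus> ev U3))"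
      unfolding factor by (simp only: ev_simps)
    finally show ?thesis
      using ne h_a_nonzero type_ring_homD(1)[OF type_ring_hom_eval4[OF roots_closed zero_closed]]
      by (simp add: integral_iff)
  qed
  have identities:
    "4*A*X1^3 + 2*(A*C2)*X1 + A*C1 = A*((X1 - X2)*(X1 - X3)*(X1 - X4))"
    "4*A*X2^3 + 2*(A*C2)*X2 + A*C1 = A*((X2 - X1)*(X2 - X3)*(X2 - X4))"
    "4*A*X3^3 + 2*(A*C2)*X3 + A*C1 = A*((X3 - X1)*(X3 - X2)*(X3 - X4))"
    "4*A*X4^3 + 2*(A*C2)*X4 + A*C1 = A*((X4 - X1)*(X4 - X2)*(X4 - X3))"
    by (unfold C2_def C1_def X4_def; Groebner_Basis.algebra)+
  note vars = eval4_vars(1-3)[OF roots_closed zero_closed]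
  from root consider "h r = x" | "h r = y" | "h r = z" | "h r = w"
    by blast
  then show False
  proof cases
    case 1
    from at_root[OF _ identities(1)] show False
      using 1 distinct zero by (simp add: vars)
  next
    case 2
    from at_root[OF _ identities(2)] show False
      using 2 distinct zero by (simp add: vars)
  next
    case 3
    from at_root[OF _ identities(3)] show False
      using 3 distinct zero by (simp add: vars)
  next
    case 4
    from at_root[OF _ identities(4)] show False
      using 4 distinct zero by (simp add: vars)
  qed
qed

lemma exists_simple_root:
  assumes no_fixed_theta: "\<And>v. v \<in> {\<theta>1, \<theta>2, \<theta>3} \<Longrightarrow> frob v \<noteq> v"
  shows "\<exists>r. int p dvd a*r^4 + c*r^2 + d*r + e \<and> \<not> int p dvd 4*a*r^3 + 2*c*r + d"
proof -
  obtain t where t: "t \<in> {x, y, z, w}" and fixed: "frob t = t"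
    using exists_fixed_root[OF no_fixed_theta] by blast
  moreover have "t \<in> carrier L"
    using t roots_closed w_closed by auto
  ultimately obtain r where r: "t = h r"
    using frob_fixed_imp_int by blast
  have "h (a*r^4 + c*r^2 + d*r + e) = quartic (h r)"
    by (simp only: quartic_def h_simps)
  also have "\<dots> = \<zero>"
    using t r quartic_eq_zero_iff by simp
  finally have "int p dvd a*r^4 + c*r^2 + d*r + e"
    using h_eq_zero_iff by simp
  moreover have "\<not> int p dvd 4*a*r^3 + 2*c*r + d"
    using simple_root_if_distinct t r roots_distinct[OF no_fixed_theta] by simp
  ultimately show ?thesis
    by blast
qed

end

lemma (in alg_closed_char) exists_simple_root_mod_p:
  fixes a c d e :: int
  assumes hyp: "([a^2*c^2 + 12*a^3*e = 0] (mod int p) \<and> cubic_nonresidue p (8*a^3*c^3 + 27*a^4*d^2))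
      \<or> (\<not> [a^2*c^2 + 12*a^3*e = 0] (mod int p) \<and> [s_seq a c d e (p + 1) = a^2*c^2 - 4*a^3*e] (mod int p))"
  shows "\<exists>r. int p dvd a*r^4 + c*r^2 + d*r + e \<and> \<not> int p dvd 4*a*r^3 + 2*c*r + d"
proof -
  have a: "\<not> int p dvd a"
  proof
    assume "int p dvd a"
    then have "int p dvd a^2*c^2 + 12*a^3*e" "int p dvd 8*a^3*c^3 + 27*a^4*d^2"
      by (simp_all add: power2_eq_square power3_eq_cube power4_eq_xxxx)
    then show False
      using hyp by (auto simp: cong_0_iff cubic_nonresidue_def)
  qed
  obtain x y z where "x \<in> carrier L" "y \<in> carrier L" "z \<in> carrier L"
    "h c = h a \<otimes> eval4 x y z \<zero> C2" "h d = h a \<otimes> eval4 x y z \<zero> C1" "h e = h a \<otimes> eval4 x y z \<zero> C0"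
    using quartic_split[OF a] by blast
  then interpret Q: depressed_quartic L p h a c d e x y z
    using a by unfold_locales
  show ?thesis
    using hyp Q.no_fixed_theta_if_noncube Q.no_fixed_theta_if_power_sum
    by (intro Q.exists_simple_root) blast
qed

lemma exists_alg_closed_char:
  assumes p: "prime p"
  obtains L :: "((int list \<times> nat) multiset \<Rightarrow> int) ring" and h where "alg_closed_char L p h"
proof -
  interpret K: residues_prime p "residue_ring (int p)"
    using p by (simp add: residues_prime_def)
  define L where "L = K.alg_closure"
  have closure: "algebraic_closure L (K.indexed_const ` carrier (residue_ring (int p)))"
    and hom: "K.indexed_const \<in> ring_hom (residue_ring (int p)) L"
    unfolding L_def using K.alg_closureE by auto
  interpret L: algebraic_closure L "K.indexed_const ` carrier (residue_ring (int p))"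
    by (rule closure)
  define h :: "int \<Rightarrow> (int list \<times> nat) multiset \<Rightarrow> int" where "h n = K.indexed_const (n mod int p)" for n
  have h_closed: "h n \<in> carrier L" for n
    unfolding h_def by (rule ring_hom_closed[OF hom]) simp
  have "h (m + n) = h m \<oplus>\<^bsub>L\<^esub> h n" for m n
    unfolding h_def by (simp add: K.add_cong ring_hom_add[OF hom, symmetric])
  moreover have "h (m * n) = h m \<otimes>\<^bsub>L\<^esub> h n" for m n
    unfolding h_def by (simp add: K.mult_cong ring_hom_mult[OF hom, symmetric])
  moreover have "h 1 = \<one>\<^bsub>L\<^esub>"
    unfolding h_def using ring_hom_one[OF hom] by (simp add: K.one_cong)
  moreover have "h n = \<zero>\<^bsub>L\<^esub> \<longleftrightarrow> int p dvd n" for n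
  proof -
    have zero: "(K.indexed_const \<zero>\<^bsub>residue_ring (int p)\<^esub> :: (int list \<times> nat) multiset \<Rightarrow> int) = \<zero>\<^bsub>L\<^esub>"
      by (rule ring_hom_zero[OF hom K.ring_axioms L.ring_axioms])
    have "h n = \<zero>\<^bsub>L\<^esub> \<longleftrightarrow>
        (K.indexed_const (n mod int p) :: (int list \<times> nat) multiset \<Rightarrow> int) = K.indexed_const \<zero>\<^bsub>residue_ring (int p)\<^esub>"
      unfolding h_def by (simp only: zero)
    also have "\<dots> \<longleftrightarrow> n mod int p = \<zero>\<^bsub>residue_ring (int p)\<^esub>"
      using K.indexed_const_is_inj by (auto dest: injD)
    finally show ?thesis
      by (simp add: K.zero_cong dvd_eq_mod_eq_0)
  qed
  ultimately have "alg_closed_char L p h"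
    using p h_closed by unfold_locales auto
  then show ?thesis
    using that by blast
qed

theorem theorem5p6:
  fixes a b c d e :: int and p :: nat
  assumes "a \<noteq> 0" and "b \<noteq> 0"
    and "prime p" and "p > 3"
    and "multiplicity (int p) b > 0"
    and "(p mod 3 = 1 \<and> [a^2*c^2 + 12*a^3*e = 0] (mod int p)
            \<and> cubic_nonresidue p (8*a^3*c^3 + 27*a^4*d^2))
         \<or> (\<not> [a^2*c^2 + 12*a^3*e = 0] (mod int p)
            \<and> [s_seq a c d e (p + 1) = a^2*c^2 - 4*a^3*e] (mod int p))"
  shows "padic_dense p (ratio_set (quartic_form a b c d e))"
proof -
  have b: "int p dvd b"
    using assms(5) not_dvd_imp_multiplicity_0 by fastforce
  obtain L :: "((int list \<times> nat) multiset \<Rightarrow> int) ring" and h where "alg_closed_char L p h"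
    using exists_alg_closed_char[OF assms(3)] .
  moreover have "([a^2*c^2 + 12*a^3*e = 0] (mod int p) \<and> cubic_nonresidue p (8*a^3*c^3 + 27*a^4*d^2))
      \<or> (\<not> [a^2*c^2 + 12*a^3*e = 0] (mod int p) \<and> [s_seq a c d e (p + 1) = a^2*c^2 - 4*a^3*e] (mod int p))"
    using assms(6) by blast
  ultimately have "\<exists>r. int p dvd a*r^4 + c*r^2 + d*r + e \<and> \<not> int p dvd 4*a*r^3 + 2*c*r + d"
    by (rule alg_closed_char.exists_simple_root_mod_p)
  then show ?thesis
    using padic_dense_quartic_if_simple_root[OF assms(3) b] by blast
qed

end
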